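(* Let $q=2^m$ with $m$ a positive integer. Let $\delta\in\mathbb{F}_{q^2}$, $b\in\mathbb{F}_q^*$, and let $i$ be a non-negative integer with $b\,\mathrm{Tr}_{q^2/q}(\delta)^{2^i+1}=1$. Then the compositional inverse of $$P(x)=b(x^q+x+\delta)^{2^i+q+1}+x$$ over $\mathbb{F}_{q^2}$ is $$P^{-1}(x)=x+b\left(\left(\mathrm{Tr}_{q^2/q}(\delta)(x^q+x)+\delta^{q+1}\right)^{q/2}+\delta\right)^{2^i+q+1}.$$
   Context: $\mathrm{Tr}_{q^2/q}(y)=y+y^q$. The compositional inverse of a permutation polynomial $f$ of $\mathbb{F}_{Q}$ is the unique polynomial $f^{-1}$ (modulo $x^Q-x$) with $f(f^{-1}(c))=f^{-1}(f(c))=c$ for all $c\in\mathbb{F}_Q$; in particular the statement includes that $P$ permutes $\mathbb{F}_{q^2}$. *)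

theory Defs
  imports Main
begin

definition tr_rel :: "nat \<Rightarrow> 'a::field \<Rightarrow> 'a" where
  "tr_rel q y = y + y ^ q"

end

theory Submission
  imports Defs "HOL-Number_Theory.Residues"
begin

(* Both P and the claimed inverse have the shape x \<mapsto> x + f (Tr x) with
   f s = b (s + \<delta>)^(2^i+q+1).  Since Tr (x + f (Tr x)) = \<phi> (Tr x) for the map
   \<phi> s = s + Tr (f s) of F_q, such a map is inverted by c \<mapsto> c + f (\<psi> (Tr c)) as soon as
   \<psi> inverts \<phi> on F_q.  For s in F_q one finds Tr (f s) = b T^(2^i) (s + \<delta>)^(q+1) and
   (s + \<delta>)^(q+1) = s^2 + s T + \<delta>^(q+1), where T = Tr \<delta>; so b T^(2^i+1) = 1 gives
   T \<phi>(s) + \<delta>^(q+1) = s^2 in characteristic 2, and \<psi> t = (T t + \<delta>^(q+1))^(q/2) is the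
   square root of the left-hand side in F_q. *)

lemma power_card_UNIV_eq_self:
  fixes x :: "'a::{field,finite}"
  shows "x ^ card (UNIV :: 'a set) = x"
proof (cases "x = 0")
  case True
  then show ?thesis by (simp add: finite_UNIV_card_ge_0)
next
  case False
  let ?U = "UNIV - {0::'a}"
  have "prod id ?U = prod ((*) x) ?U"
    by (rule sym, rule prod.reindex_bij_witness[of _ "\<lambda>y. y / x" "(*) x"]) (use False in auto)
  also have "\<dots> = x ^ card ?U * prod id ?U"
    by (simp add: prod.distrib)
  finally have "x ^ card ?U = 1"
    by simp
  moreover have "card (UNIV :: 'a set) = Suc (card ?U)"
    by (simp add: card_Diff_singleton finite_UNIV_card_ge_0)
  ultimately show ?thesis
    by (simp only: power_Suc mult_1_right)
qed

lemma CHAR_eq_if_card_UNIV_prime_power: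
  assumes "prime p" and "card (UNIV :: 'a::{field,finite} set) = p ^ n"
  shows "CHAR('a) = p"
proof -
  have "prime CHAR('a)"
    by (simp add: finite_imp_CHAR_pos prime_CHAR_semidom)
  moreover have "CHAR('a) dvd p ^ n"
    using CHAR_dvd_CARD[where 'a = 'a] assms(2) by simp
  ultimately show ?thesis
    using assms(1) prime_dvd_power primes_dvd_imp_eq by blast
qed

context
  fixes q m :: nat
  assumes CHAR_2: "CHAR('a::field) = 2"
    and q_eq: "q = 2 ^ m"
    and power_q_q: "\<And>x::'a. x ^ (q * q) = x"
begin

lemma add_self_eq_0: "x + x = (0::'a)"
  using uminus_CHAR_2[OF CHAR_2, of x] by (metis add.right_inverse)

lemma power_2_power_add: "(x + y :: 'a) ^ 2 ^ k = x ^ 2 ^ k + y ^ 2 ^ k"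
  by (rule freshmans_dream') (simp_all add: CHAR_2)

lemma power_q_add: "(x + y :: 'a) ^ q = x ^ q + y ^ q"
  unfolding q_eq by (rule power_2_power_add)

lemma tr_rel_add: "tr_rel q (x + y :: 'a) = tr_rel q x + tr_rel q y"
  by (simp add: tr_rel_def power_q_add algebra_simps)

lemma tr_rel_power_q: "tr_rel q (x::'a) ^ q = tr_rel q x"
  by (simp add: tr_rel_def power_q_add power_q_q add.commute flip: power_mult)

lemma tr_rel_eq_0_if_power_q: "(s::'a) ^ q = s \<Longrightarrow> tr_rel q s = 0"
  by (simp add: tr_rel_def add_self_eq_0)

lemma tr_rel_mult_if_power_q: "(c::'a) ^ q = c \<Longrightarrow> tr_rel q (c * y) = c * tr_rel q y"
  by (simp add: tr_rel_def power_mult_distrib distrib_left)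

lemma power_Suc_q_power_q: "((v::'a) ^ (q + 1)) ^ q = v ^ (q + 1)"
proof -
  have "(v ^ (q + 1)) ^ q = v ^ (q * q) * v ^ q"
    by (simp add: algebra_simps flip: power_mult power_add)
  then show ?thesis
    by (simp add: power_q_q mult.commute)
qed

lemma tr_rel_power_2_power_add_Suc_q:
  "tr_rel q ((v::'a) ^ (2 ^ i + q + 1)) = v ^ (q + 1) * tr_rel q v ^ 2 ^ i"
proof -
  have split: "v ^ (2 ^ i + q + 1) = v ^ (q + 1) * v ^ 2 ^ i"
    by (simp add: algebra_simps flip: power_add)
  have swap: "(v ^ 2 ^ i) ^ q = (v ^ q) ^ 2 ^ i"
    by (simp add: mult.commute flip: power_mult)
  have "(v ^ (2 ^ i + q + 1)) ^ q = v ^ (q + 1) * (v ^ q) ^ 2 ^ i"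
    by (simp only: split power_mult_distrib power_Suc_q_power_q swap)
  then show ?thesis
    unfolding tr_rel_def split by (simp add: power_2_power_add distrib_left)
qed

lemma power_Suc_q_add_if_power_q:
  assumes "(s::'a) ^ q = s"
  shows "(s + \<delta>) ^ (q + 1) = s ^ 2 + s * tr_rel q \<delta> + \<delta> ^ (q + 1)"
proof -
  have "(s + \<delta>) ^ (q + 1) = (s + \<delta> ^ q) * (s + \<delta>)"
    using assms by (simp add: power_q_add)
  then show ?thesis
    by (simp add: tr_rel_def power2_eq_square algebra_simps)
qed

lemma tr_rel_perturbation_inverse:
  fixes P Pinv f \<psi> :: "'a \<Rightarrow> 'a"
  assumes P: "\<And>x. P x = x + f (tr_rel q x)"
    and Pinv: "\<And>c. Pinv c = c + f (\<psi> (tr_rel q c))"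
    and left: "\<And>s. s ^ q = s \<Longrightarrow> \<psi> (s + tr_rel q (f s)) = s"
    and right: "\<And>t. t ^ q = t \<Longrightarrow> \<psi> t + tr_rel q (f (\<psi> t)) = t"
  shows "P (Pinv c) = c" and "Pinv (P x) = x"
proof -
  define u where "u = \<psi> (tr_rel q c)"
  have u: "u + tr_rel q (f u) = tr_rel q c"
    unfolding u_def by (rule right[OF tr_rel_power_q])
  have "tr_rel q (Pinv c) = tr_rel q c + tr_rel q (f u)"
    by (simp add: Pinv u_def tr_rel_add)
  also have "\<dots> = u + (tr_rel q (f u) + tr_rel q (f u))"
    unfolding u[symmetric] by (simp only: add.assoc)
  finally have "tr_rel q (Pinv c) = u"
    by (simp add: add_self_eq_0)
  then show "P (Pinv c) = c"
    by (simp add: P Pinv u_def add_self_eq_0 add.assoc)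
next
  have "\<psi> (tr_rel q (P x)) = tr_rel q x"
    using left[OF tr_rel_power_q, of x] by (simp add: P tr_rel_add)
  then show "Pinv (P x) = x"
    by (simp add: P Pinv add_self_eq_0 add.assoc)
qed

context
  fixes b \<delta> :: 'a and i :: nat
  assumes b_power_q: "b ^ q = b"
    and b_tr_rel: "b * tr_rel q \<delta> ^ (2 ^ i + 1) = 1"
    and m_pos: "0 < m"
begin

lemma power_half_q_squared: "((a::'a) ^ (q div 2)) ^ 2 = a ^ q"
proof -
  have "even q"
    using m_pos by (simp add: q_eq)
  then have "2 * (q div 2) = q"
    by simp
  then show ?thesis
    by (metis power_even_eq)
qed

lemma b_tr_rel_cancel: "b * tr_rel q \<delta> ^ 2 ^ i * (tr_rel q \<delta> * y) = y"
proof -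
  have "b * tr_rel q \<delta> ^ 2 ^ i * (tr_rel q \<delta> * y) = b * tr_rel q \<delta> ^ (2 ^ i + 1) * y"
    by (simp add: mult_ac)
  then show ?thesis
    unfolding b_tr_rel by simp
qed

lemma tr_rel_b_power_shift:
  assumes "s ^ q = s"
  shows "tr_rel q (b * (s + \<delta>) ^ (2 ^ i + q + 1))
    = b * tr_rel q \<delta> ^ 2 ^ i * (s + \<delta>) ^ (q + 1)"
proof -
  have "tr_rel q (s + \<delta>) = tr_rel q \<delta>"
    by (simp add: tr_rel_add tr_rel_eq_0_if_power_q[OF assms])
  then show ?thesis
    unfolding tr_rel_mult_if_power_q[OF b_power_q] tr_rel_power_2_power_add_Suc_q
    by (simp only: mult_ac)
qed

lemma trace_map_inverse_left:
  assumes s: "s ^ q = s"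
  shows "(tr_rel q \<delta> * (s + tr_rel q (b * (s + \<delta>) ^ (2 ^ i + q + 1))) + \<delta> ^ (q + 1))
    ^ (q div 2) = s"
proof -
  let ?T = "tr_rel q \<delta>" and ?N = "\<delta> ^ (q + 1)"
  have "?T * (s + tr_rel q (b * (s + \<delta>) ^ (2 ^ i + q + 1))) + ?N
      = ?T * s + b * ?T ^ 2 ^ i * (?T * (s ^ 2 + s * ?T + ?N)) + ?N"
    unfolding tr_rel_b_power_shift[OF s] power_Suc_q_add_if_power_q[OF s]
    by (simp add: algebra_simps)
  also have "\<dots> = ?T * s + (s ^ 2 + s * ?T + ?N) + ?N"
    unfolding b_tr_rel_cancel ..
  also have "\<dots> = s ^ 2 + (s * ?T + s * ?T) + (?N + ?N)"
    by (simp add: algebra_simps)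
  also have "\<dots> = s ^ 2"
    by (simp add: add_self_eq_0)
  finally have "?T * (s + tr_rel q (b * (s + \<delta>) ^ (2 ^ i + q + 1))) + ?N = s ^ 2" .
  moreover have "(s ^ 2) ^ (q div 2) = s"
    using power_half_q_squared[of s] s by (simp add: mult.commute flip: power_mult)
  ultimately show ?thesis
    by simp
qed

lemma trace_map_inverse_right:
  assumes t: "t ^ q = t"
  defines "u \<equiv> (tr_rel q \<delta> * t + \<delta> ^ (q + 1)) ^ (q div 2)"
  shows "u + tr_rel q (b * (u + \<delta>) ^ (2 ^ i + q + 1)) = t"
proof -
  let ?T = "tr_rel q \<delta>" and ?N = "\<delta> ^ (q + 1)"
  have a: "(?T * t + ?N) ^ q = ?T * t + ?N"
    by (simp only: power_q_add power_mult_distrib tr_rel_power_q t power_Suc_q_power_q)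
  have u_squared: "u ^ 2 = ?T * t + ?N"
    unfolding u_def power_half_q_squared a ..
  have "u ^ q = ((?T * t + ?N) ^ q) ^ (q div 2)"
    unfolding u_def by (simp only: mult.commute flip: power_mult)
  then have u: "u ^ q = u"
    unfolding a u_def .
  have "(u + \<delta>) ^ (q + 1) = ?T * (t + u) + (?N + ?N)"
    unfolding power_Suc_q_add_if_power_q[OF u] u_squared by (simp add: algebra_simps)
  then have "tr_rel q (b * (u + \<delta>) ^ (2 ^ i + q + 1)) = b * ?T ^ 2 ^ i * (?T * (t + u))"
    unfolding tr_rel_b_power_shift[OF u] by (simp add: add_self_eq_0)
  also have "\<dots> = t + u"
    by (rule b_tr_rel_cancel)
  finally show ?thesis
    by (simp only: add.left_commute[of u t] add_self_eq_0 add_0_right)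
qed

end

end

theorem theorem3p7:
  fixes m :: nat and i :: nat and q :: nat
    and \<delta> b :: "'a::{field,finite}"
    and P Pinv :: "'a \<Rightarrow> 'a"
  assumes "m > 0"
    and "q = 2 ^ m"
    and "card (UNIV :: 'a set) = q ^ 2"
    and "b ^ q = b" and "b \<noteq> 0"
    and "b * (tr_rel q \<delta>) ^ (2 ^ i + 1) = 1"
    and "\<And>x. P x = b * (x ^ q + x + \<delta>) ^ (2 ^ i + q + 1) + x"
    and "\<And>x. Pinv x = x + b * ((tr_rel q \<delta> * (x ^ q + x) + \<delta> ^ (q + 1)) ^ (q div 2) + \<delta>) ^ (2 ^ i + q + 1)"
  shows "bij P \<and> (\<forall>c. P (Pinv c) = c) \<and> (\<forall>c. Pinv (P c) = c)"
proof -
  have "card (UNIV :: 'a set) = 2 ^ (2 * m)"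
    using assms(2,3) by (simp add: mult.commute flip: power_mult)
  then have CHAR_2: "CHAR('a) = 2"
    by (rule CHAR_eq_if_card_UNIV_prime_power[OF two_is_prime_nat])
  have power_q_q: "x ^ (q * q) = x" for x :: 'a
    using power_card_UNIV_eq_self[of x] assms(3) by (simp add: power2_eq_square)
  define f where "f s = b * (s + \<delta>) ^ (2 ^ i + q + 1)" for s
  define \<psi> where "\<psi> t = (tr_rel q \<delta> * t + \<delta> ^ (q + 1)) ^ (q div 2)" for t
  have P: "P x = x + f (tr_rel q x)" for x
    using assms(7) by (simp add: f_def tr_rel_def add.commute)
  have Pinv: "Pinv c = c + f (\<psi> (tr_rel q c))" for c
    using assms(8) by (simp add: f_def \<psi>_def tr_rel_def add.commute)
  note setting = CHAR_2 assms(2) power_q_q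
  have left: "\<psi> (s + tr_rel q (f s)) = s" if "s ^ q = s" for s
    using trace_map_inverse_left[OF setting assms(4,6,1) that] by (simp add: f_def \<psi>_def)
  have right: "\<psi> t + tr_rel q (f (\<psi> t)) = t" if "t ^ q = t" for t
    using trace_map_inverse_right[OF setting assms(4,6,1) that] by (simp add: f_def \<psi>_def)
  have inverse: "P (Pinv c) = c" "Pinv (P c) = c" for c
    by (rule tr_rel_perturbation_inverse[OF setting P Pinv], fact left, fact right)+
  then have "bij P"
    by (intro o_bij[of Pinv]) auto
  with inverse show ?thesis
    by blast
qed

end
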